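(* Let $\alpha\in\mathbb{N}_0$. For all $n\in\mathbb{N}$ (i.e. $n\ge1$), $$(\alpha+2)!\,\big[L_{2,x}^{\alpha}+n\big]T_n^{\alpha}(x)=-(n+1)_{\alpha}(\alpha+1)(\alpha+2)\,L_{n-1}^{\alpha+2}(x),$$ $$\big[L_{2\alpha+4,x}^{\alpha}+(n)_{\alpha+2}\big]L_n^{\alpha}(x)=(n+1)_{\alpha}(\alpha+1)(\alpha+2)\,L_{n-1}^{\alpha+2}(x).$$ For $n=0$ both left-hand sides vanish.
   Context: $D_x^i$ is the $i$-fold derivative; $(a)_k$ is the Pochhammer symbol. $L_n^{\gamma}(x)=\frac{(\gamma+1)_n}{n!}{}_1F_1(-n;\gamma+1;x)$ are the Laguerre polynomials. $L_{2,x}^{\alpha}y=xy''+(\alpha+1-x)y'$ and $L_{2\alpha+4,x}^{\alpha}y(x)=(-1)^{\alpha+1}e^x x\,D_x^{\alpha+2}\{e^{-x}D_x^{\alpha+2}[x^{\alpha+1}y(x)]\}$. $T_0^\alpha=0$ and for $n\ge1$, $T_n^{\alpha}(x)=-t_n^{\alpha}\,x\,L_{n-1}^{\alpha+2}(x)$ with $t_n^{\alpha}=(\alpha+2)_{n-1}/n!$. *)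

theory Defs
  imports "HOL-Analysis.Analysis"
begin

definition laguerre :: "real \<Rightarrow> nat \<Rightarrow> real \<Rightarrow> real" where
  "laguerre \<gamma> n x = pochhammer (\<gamma> + 1) n / fact n *
     (\<Sum>k\<le>n. pochhammer (- real n) k / (pochhammer (\<gamma> + 1) k * fact k) * x ^ k)"

definition Dx :: "nat \<Rightarrow> (real \<Rightarrow> real) \<Rightarrow> real \<Rightarrow> real" where
  "Dx i f = ((deriv :: (real \<Rightarrow> real) \<Rightarrow> real \<Rightarrow> real) ^^ i) f"

definition L2op :: "nat \<Rightarrow> (real \<Rightarrow> real) \<Rightarrow> real \<Rightarrow> real" where
  "L2op \<alpha> y x = x * Dx 2 y x + (real \<alpha> + 1 - x) * Dx 1 y x"

definition Lhigh :: "nat \<Rightarrow> (real \<Rightarrow> real) \<Rightarrow> real \<Rightarrow> real" where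
  "Lhigh \<alpha> y x = (-1) ^ (\<alpha> + 1) * exp x * x *
     Dx (\<alpha> + 2) (\<lambda>t. exp (- t) * Dx (\<alpha> + 2) (\<lambda>s. s ^ (\<alpha> + 1) * y s) t) x"

definition tcoef :: "nat \<Rightarrow> nat \<Rightarrow> real" where
  "tcoef \<alpha> n = pochhammer (real \<alpha> + 2) (n - 1) / fact n"

definition Tpoly :: "nat \<Rightarrow> nat \<Rightarrow> real \<Rightarrow> real" where
  "Tpoly \<alpha> n x = (if n = 0 then 0 else - tcoef \<alpha> n * x * laguerre (real \<alpha> + 2) (n - 1) x)"

end

theory Submission
  imports Defs "HOL-Computational_Algebra.Polynomial"
begin

text \<open>
  All operators involved map polynomials to polynomials, so both identities are identities between
  Laguerre polynomials. With the coefficients of L_n^\<gamma> written as binomial coefficients, three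
  relations follow by comparing coefficients: (L_{n+1}^\<gamma>)' = -L_n^{\<gamma>+1},
  (L_n^\<gamma>)' - L_n^\<gamma> = -L_n^{\<gamma>+1}, and the Laguerre differential equation.
  The first identity is the differential equation of L_{n-1}^{\<alpha>+2} multiplied by x.
  For the second, D^{\<alpha>+2}[x^{\<alpha>+1} L_n^\<alpha>] follows from the Rodrigues-type rule
  D^i[x^i L_j^i] = (j+1)_i L_j^0, and conjugation by e^{-x} turns D into p \<mapsto> p' - p, which raises
  the parameter of a Laguerre polynomial by one. What remains is a contiguous relation between
  L_{n-1}^{\<alpha>+3}, (L_{n-1}^{\<alpha>+2})' and L_n^\<alpha>; expressed through y = L_n^\<alpha> and its
  derivatives, it is a linear combination of the differential equation of y and its derivative.
\<close>

definition laguerre_poly :: "real \<Rightarrow> nat \<Rightarrow> real poly" where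
  "laguerre_poly \<gamma> n = (\<Sum>k\<le>n. monom ((-1) ^ k / fact k * ((\<gamma> + real n) gchoose (n - k))) k)"

lemma coeff_laguerre_poly:
  "coeff (laguerre_poly \<gamma> n) k =
     (if k \<le> n then (-1) ^ k / fact k * ((\<gamma> + real n) gchoose (n - k)) else 0)"
  unfolding laguerre_poly_def by (auto simp: coeff_sum coeff_monom)

lemma laguerre_poly_0 [simp]: "laguerre_poly \<gamma> 0 = 1"
  by (simp add: laguerre_poly_def)

lemma poly_laguerre_poly:
  assumes "\<gamma> > -1"
  shows "poly (laguerre_poly \<gamma> n) x = laguerre \<gamma> n x"
proof -
  have coeff: "pochhammer (\<gamma> + 1) n / fact n * (pochhammer (- real n) k / (pochhammer (\<gamma> + 1) k * fact k))
      = (-1) ^ k / fact k * ((\<gamma> + real n) gchoose (n - k))" if "k \<le> n" for k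
  proof -
    obtain r where n: "n = k + r" using \<open>k \<le> n\<close> le_Suc_ex by blast
    have p1: "pochhammer (\<gamma> + 1) n = pochhammer (\<gamma> + 1) k * pochhammer (\<gamma> + real k + 1) r"
      unfolding n pochhammer_product' by (simp add: add_ac)
    have p2: "pochhammer (- real n) k = (-1) ^ k * fact n / fact r"
    proof -
      have "fact n = (fact r * pochhammer (real r + 1) k :: real)"
        unfolding pochhammer_fact n add.commute[of k r] pochhammer_product' by (simp add: add.commute)
      then show ?thesis unfolding pochhammer_minus by (simp add: n add_ac)
    qed
    have p3: "(\<gamma> + real n) gchoose (n - k) = pochhammer (\<gamma> + real k + 1) r / fact r"
      unfolding gbinomial_pochhammer' by (simp add: n)
    have "pochhammer (\<gamma> + 1) k > 0"
      using assms by (intro pochhammer_pos) simp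
    then show ?thesis
      unfolding p1 p2 p3 by (simp add: field_simps)
  qed
  have "laguerre \<gamma> n x = (\<Sum>k\<le>n. pochhammer (\<gamma> + 1) n / fact n
          * (pochhammer (- real n) k / (pochhammer (\<gamma> + 1) k * fact k)) * x ^ k)"
    by (simp add: laguerre_def sum_distrib_left mult.assoc)
  also have "\<dots> = poly (laguerre_poly \<gamma> n) x"
    unfolding laguerre_poly_def poly_sum poly_monom
    by (intro sum.cong refl) (simp add: coeff del: times_divide_eq_right times_divide_eq_left)
  finally show ?thesis ..
qed

lemma pderiv_laguerre_poly_Suc: "pderiv (laguerre_poly \<gamma> (Suc n)) = - laguerre_poly (\<gamma> + 1) n"
  by (rule poly_eqI) (simp add: coeff_pderiv coeff_laguerre_poly add_ac)

lemma pderiv_minus_laguerre_poly: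
  "pderiv (laguerre_poly \<gamma> n) - laguerre_poly \<gamma> n = - laguerre_poly (\<gamma> + 1) n"
proof (cases n)
  case (Suc m)
  show ?thesis
  proof (rule poly_eqI)
    fix k
    have "(\<gamma> + 1 + real (Suc m)) gchoose (Suc m - k)
        = ((\<gamma> + 1 + real m) gchoose (m - k)) + ((\<gamma> + real (Suc m)) gchoose (Suc m - k))"
      if "k \<le> m"
      using gbinomial_Suc_Suc[of "\<gamma> + real (Suc m)" "m - k"] that by (simp add: Suc_diff_le add_ac)
    then show "coeff (pderiv (laguerre_poly \<gamma> n) - laguerre_poly \<gamma> n) k = coeff (- laguerre_poly (\<gamma> + 1) n) k"
      unfolding Suc pderiv_laguerre_poly_Suc
      by (cases "k \<le> m") (auto simp: coeff_laguerre_poly le_Suc_eq algebra_simps)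
  qed
qed simp

lemma laguerre_poly_Suc_param:
  "laguerre_poly \<gamma> (Suc n) = laguerre_poly (\<gamma> + 1) (Suc n) - laguerre_poly (\<gamma> + 1) n"
  using pderiv_minus_laguerre_poly[of \<gamma> "Suc n"] by (simp add: pderiv_laguerre_poly_Suc algebra_simps)

definition laguerre_op :: "real \<Rightarrow> real poly \<Rightarrow> real poly" where
  "laguerre_op \<gamma> p = [:0, 1:] * pderiv (pderiv p) + [:\<gamma> + 1, -1:] * pderiv p"

lemma coeff_laguerre_op:
  "coeff (laguerre_op \<gamma> p) k = (real k + \<gamma> + 1) * coeff (pderiv p) k - real k * coeff p k"
  by (cases k) (simp_all add: laguerre_op_def coeff_pderiv algebra_simps)

lemma poly_laguerre_op:
  "poly (laguerre_op \<gamma> p) x = x * poly (pderiv (pderiv p)) x + (\<gamma> + 1 - x) * poly (pderiv p) x"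
  by (simp add: laguerre_op_def algebra_simps)

lemma laguerre_op_smult: "laguerre_op \<gamma> (smult c p) = smult c (laguerre_op \<gamma> p)"
  by (rule poly_ext) (simp add: poly_laguerre_op pderiv_smult algebra_simps)

lemma pderiv_laguerre_op: "pderiv (laguerre_op \<gamma> p) = laguerre_op (\<gamma> + 1) (pderiv p) - pderiv p"
  by (rule poly_ext)
    (simp add: laguerre_op_def pderiv_add pderiv_mult pderiv_pCons pderiv_smult pderiv_minus algebra_simps)

lemma laguerre_op_laguerre_poly:
  "laguerre_op \<gamma> (laguerre_poly \<gamma> n) = - smult (real n) (laguerre_poly \<gamma> n)"
proof (cases n)
  case (Suc m)
  show ?thesis
  proof (rule poly_eqI)
    fix k
    show "coeff (laguerre_op \<gamma> (laguerre_poly \<gamma> n)) k = coeff (- smult (real n) (laguerre_poly \<gamma> n)) k"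
    proof (cases "k \<le> m")
      case True
      define s :: real where "s = (-1) ^ k / fact k"
      define a where "a = \<gamma> + 1 + real m"
      have "(real k + \<gamma> + 1) * (a gchoose (m - k)) + real k * (a gchoose (Suc m - k))
          = real (Suc m) * (a gchoose (Suc m - k))"
        using gbinomial_mult_1[of a "m - k"] True by (simp add: a_def Suc_diff_le algebra_simps)
      then have "- s * ((real k + \<gamma> + 1) * (a gchoose (m - k)) + real k * (a gchoose (Suc m - k)))
          = - s * (real (Suc m) * (a gchoose (Suc m - k)))"
        by (rule arg_cong)
      then have "(real k + \<gamma> + 1) * - (s * (a gchoose (m - k))) - real k * (s * (a gchoose (Suc m - k)))
          = - (real (Suc m) * (s * (a gchoose (Suc m - k))))"
        by (simp add: algebra_simps)
      with True show ?thesis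
        unfolding Suc coeff_laguerre_op pderiv_laguerre_poly_Suc
        by (simp add: coeff_laguerre_poly s_def a_def add_ac)
    qed (simp add: Suc coeff_laguerre_op pderiv_laguerre_poly_Suc coeff_laguerre_poly)
  qed
qed (simp add: laguerre_op_def)

lemma laguerre_op_x_laguerre_poly:
  "laguerre_op \<gamma> ([:0, 1:] * laguerre_poly (\<gamma> + 2) m)
     + smult (real (Suc m)) ([:0, 1:] * laguerre_poly (\<gamma> + 2) m)
   = smult (\<gamma> + 1) (laguerre_poly (\<gamma> + 2) m)"
proof (rule poly_ext)
  fix x
  define z where "z = laguerre_poly (\<gamma> + 2) m"
  have "poly (laguerre_op \<gamma> ([:0, 1:] * z) + smult (real (Suc m)) ([:0, 1:] * z)) x
      - poly (smult (\<gamma> + 1) z) x = x * (poly (laguerre_op (\<gamma> + 2) z) x + real m * poly z x)"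
    (is "?lhs - ?rhs = _")
    by (simp add: poly_laguerre_op pderiv_mult pderiv_pCons pderiv_add algebra_simps)
  also have "\<dots> = 0"
    unfolding z_def laguerre_op_laguerre_poly by simp
  finally show "?lhs = ?rhs"
    by simp
qed

lemma laguerre_poly_contiguous:
  "smult (real m + \<gamma> + 2) ([:0, 1:] * laguerre_poly (\<gamma> + 3) m)
     + smult (real m + 1) ([:0, 1:] * pderiv (laguerre_poly (\<gamma> + 2) m))
     + smult ((real m + 1) * (real m + \<gamma> + 2)) (laguerre_poly \<gamma> (Suc m))
   = smult ((\<gamma> + 1) * (\<gamma> + 2)) (laguerre_poly (\<gamma> + 2) m)"
proof (rule poly_ext)
  fix x
  define y where "y = laguerre_poly \<gamma> (Suc m)"
  define y1 y2 y3 where "y1 = pderiv y" and "y2 = pderiv y1" and "y3 = pderiv y2"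
  have L2: "laguerre_poly (\<gamma> + 2) m = pderiv (pderiv y) - pderiv y"
    using pderiv_minus_laguerre_poly[of "\<gamma> + 1" m]
    by (simp add: y_def pderiv_laguerre_poly_Suc pderiv_minus algebra_simps)
  have L3: "laguerre_poly (\<gamma> + 3) m = laguerre_poly (\<gamma> + 2) m - pderiv (laguerre_poly (\<gamma> + 2) m)"
    using pderiv_minus_laguerre_poly[of "\<gamma> + 2" m] by (simp add: algebra_simps)
  have ode: "poly (laguerre_op \<gamma> y) x + real (Suc m) * poly y x = 0"
    unfolding y_def laguerre_op_laguerre_poly by simp
  have "laguerre_op (\<gamma> + 1) (pderiv y) = pderiv (laguerre_op \<gamma> y) + pderiv y"
    by (simp add: pderiv_laguerre_op)
  also have "\<dots> = - smult (real m) (pderiv y)"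
    by (simp add: y_def laguerre_op_laguerre_poly pderiv_minus pderiv_diff pderiv_smult smult_add_left)
  finally have ode': "poly (laguerre_op (\<gamma> + 1) y1) x + real m * poly y1 x = 0"
    by (simp add: y1_def)
  have "poly (smult (real m + \<gamma> + 2) ([:0, 1:] * laguerre_poly (\<gamma> + 3) m)
      + smult (real m + 1) ([:0, 1:] * pderiv (laguerre_poly (\<gamma> + 2) m))
      + smult ((real m + 1) * (real m + \<gamma> + 2)) (laguerre_poly \<gamma> (Suc m))) x
    - poly (smult ((\<gamma> + 1) * (\<gamma> + 2)) (laguerre_poly (\<gamma> + 2) m)) x
    = (real m + \<gamma> + 2) * (poly (laguerre_op \<gamma> y) x + real (Suc m) * poly y x)
      - (\<gamma> + 1) * (poly (laguerre_op (\<gamma> + 1) y1) x + real m * poly y1 x)"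
    (is "?lhs - ?rhs = _")
    unfolding L3 L2 poly_laguerre_op y1_def[symmetric] y_def[symmetric]
    by (simp add: pderiv_diff y2_def[symmetric] y3_def[symmetric] algebra_simps)
  with ode ode' show "?lhs = ?rhs"
    by simp
qed

lemma pderiv_monom_laguerre_poly:
  "pderiv (monom 1 (Suc k) * laguerre_poly (real (Suc k)) j)
     = smult (real (j + Suc k)) (monom 1 k * laguerre_poly (real k) j)"
proof (rule poly_eqI)
  fix i
  consider "i < k" | l where "i = k + l" "l \<le> j" | l where "i = k + l" "l > j"
    by (metis le_add_diff_inverse not_le)
  then show "coeff (pderiv (monom 1 (Suc k) * laguerre_poly (real (Suc k)) j)) i
      = coeff (smult (real (j + Suc k)) (monom 1 k * laguerre_poly (real k) j)) i"
  proof cases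
    case (2 l)
    have "(real (Suc k + j) - real (j - l)) * (real (Suc k + j) gchoose (j - l))
        = real (Suc k + j) * (real (k + j) gchoose (j - l))"
      using gbinomial_absorb_comp[of "real (Suc k + j)" "j - l"] by simp
    with 2 show ?thesis
      by (simp add: coeff_pderiv coeff_monom_mult coeff_laguerre_poly field_simps)
  qed (simp_all add: coeff_pderiv coeff_monom_mult coeff_laguerre_poly)
qed

lemma higher_pderiv_monom_laguerre_poly:
  "(pderiv ^^ i) (monom 1 i * laguerre_poly (real i) j) = smult (pochhammer (real j + 1) i) (laguerre_poly 0 j)"
proof (induction i)
  case (Suc i)
  have "(pderiv ^^ Suc i) (monom 1 (Suc i) * laguerre_poly (real (Suc i)) j)
      = (pderiv ^^ i) (smult (real (j + Suc i)) (monom 1 i * laguerre_poly (real i) j))"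
    by (simp only: funpow_Suc_right comp_def pderiv_monom_laguerre_poly)
  then show ?case
    by (simp add: Suc.IH higher_pderiv_smult pochhammer_rec' algebra_simps)
qed simp

lemma higher_pderiv_diff: "(pderiv ^^ n) (p - q :: 'a :: idom poly) = (pderiv ^^ n) p - (pderiv ^^ n) q"
  by (induction n arbitrary: p q) (simp_all del: funpow.simps add: funpow_Suc_right pderiv_diff)

lemma higher_pderiv_monom_laguerre_poly_Suc:
  "(pderiv ^^ (\<alpha> + 2)) (monom 1 (\<alpha> + 1) * laguerre_poly (real \<alpha>) (Suc m))
     = smult (- pochhammer (real m + 2) (\<alpha> + 1)) (laguerre_poly 1 m)
       + smult (- pochhammer (real m + 1) (\<alpha> + 1)) (pderiv (laguerre_poly 0 m))"
proof -
  have split: "laguerre_poly (real \<alpha>) (Suc m)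
      = laguerre_poly (real (\<alpha> + 1)) (Suc m) - laguerre_poly (real (\<alpha> + 1)) m"
    using laguerre_poly_Suc_param[of "real \<alpha>" m] by (simp add: add.commute)
  have inner: "(pderiv ^^ (\<alpha> + 1)) (monom 1 (\<alpha> + 1) * laguerre_poly (real \<alpha>) (Suc m))
      = smult (pochhammer (real m + 2) (\<alpha> + 1)) (laguerre_poly 0 (Suc m))
        - smult (pochhammer (real m + 1) (\<alpha> + 1)) (laguerre_poly 0 m)"
    unfolding split right_diff_distrib higher_pderiv_diff higher_pderiv_monom_laguerre_poly
    by (simp add: add_ac)
  show ?thesis
    using arg_cong[OF inner, of pderiv]
    by (simp add: numeral_2_eq_2 pderiv_diff pderiv_smult pderiv_laguerre_poly_Suc)
qed

text \<open>(e^{-x} p)' = e^{-x} (p' - p): the powers of this operator give the derivatives of e^{-x} p.\<close>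

definition twisted_pderiv :: "real poly \<Rightarrow> real poly" where
  "twisted_pderiv p = pderiv p - p"

lemma higher_twisted_pderiv_0 [simp]: "(twisted_pderiv ^^ n) 0 = 0"
  by (induction n) (simp_all add: twisted_pderiv_def)

lemma higher_twisted_pderiv_add:
  "(twisted_pderiv ^^ n) (p + q) = (twisted_pderiv ^^ n) p + (twisted_pderiv ^^ n) q"
  by (induction n) (simp_all add: twisted_pderiv_def pderiv_add)

lemma higher_twisted_pderiv_smult: "(twisted_pderiv ^^ n) (smult c p) = smult c ((twisted_pderiv ^^ n) p)"
  by (induction n) (simp_all add: twisted_pderiv_def pderiv_smult smult_diff_right)

lemma higher_twisted_pderiv_pderiv: "(twisted_pderiv ^^ n) (pderiv p) = pderiv ((twisted_pderiv ^^ n) p)"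
  by (induction n) (simp_all add: twisted_pderiv_def pderiv_diff)

lemma higher_twisted_pderiv_laguerre_poly:
  "(twisted_pderiv ^^ n) (laguerre_poly \<gamma> m) = smult ((-1) ^ n) (laguerre_poly (\<gamma> + real n) m)"
  by (induction n) (simp_all add: twisted_pderiv_def pderiv_smult pderiv_minus_laguerre_poly add_ac
      flip: smult_diff_right)

lemma Dx_poly: "Dx i (poly p) = poly ((pderiv ^^ i) p)"
proof (induction i)
  case (Suc i)
  show ?case
    by (rule ext) (simp add: Dx_def Suc[unfolded Dx_def] DERIV_imp_deriv)
qed (simp add: Dx_def)

lemma Dx_exp_neg_poly:
  "Dx i (\<lambda>t. exp (- t) * poly p t) = (\<lambda>t. exp (- t) * poly ((twisted_pderiv ^^ i) p) t)"
proof (induction i)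
  case (Suc i)
  have "((\<lambda>t. exp (- t) * poly q t) has_real_derivative exp (- t) * poly (twisted_pderiv q) t) (at t)"
    for q t
    by (auto intro!: derivative_eq_intros simp: twisted_pderiv_def algebra_simps)
  then show ?case
    by (intro ext) (simp add: Dx_def Suc[unfolded Dx_def] DERIV_imp_deriv)
qed (simp add: Dx_def)

lemma L2op_poly: "L2op \<alpha> (poly p) x = poly (laguerre_op (real \<alpha>) p) x"
  by (simp add: L2op_def Dx_poly poly_laguerre_op numeral_2_eq_2)

lemma Lhigh_poly:
  "Lhigh \<alpha> (poly p) x = (-1) ^ (\<alpha> + 1) * x
     * poly ((twisted_pderiv ^^ (\<alpha> + 2)) ((pderiv ^^ (\<alpha> + 2)) (monom 1 (\<alpha> + 1) * p))) x"
proof -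
  have monom: "(\<lambda>s. s ^ (\<alpha> + 1) * poly p s) = poly (monom 1 (\<alpha> + 1) * p)"
    by (simp add: poly_monom fun_eq_iff)
  show ?thesis
    unfolding Lhigh_def monom Dx_poly Dx_exp_neg_poly by (simp add: exp_minus field_simps)
qed

lemma fact_mult_tcoef:
  "fact (\<alpha> + 2) * tcoef \<alpha> (Suc m) = pochhammer (real m + 2) \<alpha> * (real \<alpha> + 2)"
proof -
  have "fact (\<alpha> + 2) * tcoef \<alpha> (Suc m)
      = (real \<alpha> + 2) * (fact (\<alpha> + 1) * pochhammer (real \<alpha> + 2) m) / fact (Suc m)"
    by (simp add: tcoef_def numeral_2_eq_2)
  also have "fact (\<alpha> + 1) * pochhammer (real \<alpha> + 2) m = (fact (Suc m + \<alpha>) :: real)"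
    unfolding pochhammer_fact add.commute[of "Suc m"] pochhammer_product' by (simp add: pochhammer_rec add_ac)
  also have "(fact (Suc m + \<alpha>) :: real) = fact (Suc m) * pochhammer (real m + 2) \<alpha>"
    unfolding pochhammer_fact pochhammer_product' by (simp add: add_ac)
  finally show ?thesis
    by simp
qed

lemma L2op_Tpoly:
  assumes "n \<ge> 1"
  shows "fact (\<alpha> + 2) * (L2op \<alpha> (Tpoly \<alpha> n) x + real n * Tpoly \<alpha> n x)
    = - pochhammer (real n + 1) \<alpha> * (real \<alpha> + 1) * (real \<alpha> + 2) * laguerre (real \<alpha> + 2) (n - 1) x"
proof -
  obtain m where n: "n = Suc m" using assms by (cases n) auto
  define q where "q = [:0, 1:] * laguerre_poly (real \<alpha> + 2) m"
  have T: "Tpoly \<alpha> n = poly (smult (- tcoef \<alpha> n) q)"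
    by (simp add: Tpoly_def q_def n poly_laguerre_poly fun_eq_iff)
  have "L2op \<alpha> (Tpoly \<alpha> n) x + real n * Tpoly \<alpha> n x
      = - tcoef \<alpha> n * poly (laguerre_op (real \<alpha>) q + smult (real n) q) x"
    unfolding T L2op_poly laguerre_op_smult by (simp add: algebra_simps)
  also have "\<dots> = - tcoef \<alpha> n * (real \<alpha> + 1) * laguerre (real \<alpha> + 2) m x"
    unfolding q_def n laguerre_op_x_laguerre_poly by (simp add: poly_laguerre_poly)
  finally have "fact (\<alpha> + 2) * (L2op \<alpha> (Tpoly \<alpha> n) x + real n * Tpoly \<alpha> n x)
      = - (fact (\<alpha> + 2) * tcoef \<alpha> n) * (real \<alpha> + 1) * laguerre (real \<alpha> + 2) m x"
    by simp
  then show ?thesis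
    unfolding n fact_mult_tcoef by (simp add: add.commute)
qed

lemma Lhigh_laguerre:
  assumes "n \<ge> 1"
  shows "Lhigh \<alpha> (laguerre (real \<alpha>) n) x + pochhammer (real n) (\<alpha> + 2) * laguerre (real \<alpha>) n x
    = pochhammer (real n + 1) \<alpha> * (real \<alpha> + 1) * (real \<alpha> + 2) * laguerre (real \<alpha> + 2) (n - 1) x"
proof -
  obtain m where n: "n = Suc m" using assms by (cases n) auto
  define D where "D = pochhammer (real m + 2) \<alpha>"
  define L2 L3 where "L2 = laguerre_poly (real \<alpha> + 2) m" and "L3 = laguerre_poly (real \<alpha> + 3) m"
  have lag: "laguerre (real \<alpha>) n = poly (laguerre_poly (real \<alpha>) n)"
    by (simp add: poly_laguerre_poly fun_eq_iff)
  have tw: "poly ((twisted_pderiv ^^ (\<alpha> + 2))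
        ((pderiv ^^ (\<alpha> + 2)) (monom 1 (\<alpha> + 1) * laguerre_poly (real \<alpha>) n))) x
      = (-1) ^ \<alpha> * (- pochhammer (real m + 2) (\<alpha> + 1) * poly L3 x
          - pochhammer (real m + 1) (\<alpha> + 1) * poly (pderiv L2) x)"
    unfolding n higher_pderiv_monom_laguerre_poly_Suc higher_twisted_pderiv_add higher_twisted_pderiv_smult
      higher_twisted_pderiv_pderiv higher_twisted_pderiv_laguerre_poly
    by (simp add: L2_def L3_def pderiv_smult algebra_simps)
  have A: "pochhammer (real m + 2) (\<alpha> + 1) = D * (real m + real \<alpha> + 2)"
    by (simp add: D_def pochhammer_rec' algebra_simps)
  have B: "pochhammer (real m + 1) (\<alpha> + 1) = D * (real m + 1)"
    using pochhammer_rec[of "real m + 1" \<alpha>] by (simp add: D_def algebra_simps)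
  have sign: "(-1) ^ \<alpha> * (-1) ^ \<alpha> = (1 :: real)"
    by (simp flip: power_mult_distrib)
  have "Lhigh \<alpha> (laguerre (real \<alpha>) n) x
      = (-1) ^ (\<alpha> + 1) * x * ((-1) ^ \<alpha> * (- pochhammer (real m + 2) (\<alpha> + 1) * poly L3 x
          - pochhammer (real m + 1) (\<alpha> + 1) * poly (pderiv L2) x))"
    unfolding lag Lhigh_poly tw ..
  also have "\<dots> = D * (real m + real \<alpha> + 2) * (x * poly L3 x) + D * (real m + 1) * (x * poly (pderiv L2) x)"
    unfolding A B using sign by (simp add: algebra_simps)
  finally have Lh: "Lhigh \<alpha> (laguerre (real \<alpha>) n) x
      = D * (real m + real \<alpha> + 2) * (x * poly L3 x) + D * (real m + 1) * (x * poly (pderiv L2) x)" .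
  have P: "pochhammer (real n) (\<alpha> + 2) = D * ((real m + 1) * (real m + real \<alpha> + 2))"
  proof -
    have "pochhammer (real n) (\<alpha> + 2) = real n * pochhammer (real m + 2) (\<alpha> + 1)"
      using pochhammer_rec[of "real n" "\<alpha> + 1"] by (simp add: n numeral_2_eq_2 add_ac)
    then show ?thesis
      unfolding A by (simp add: n algebra_simps)
  qed
  have contig: "(real m + real \<alpha> + 2) * (x * poly L3 x) + (real m + 1) * (x * poly (pderiv L2) x)
      + (real m + 1) * (real m + real \<alpha> + 2) * laguerre (real \<alpha>) n x = (real \<alpha> + 1) * (real \<alpha> + 2) * poly L2 x"
    using arg_cong[OF laguerre_poly_contiguous[of m "real \<alpha>"], of "\<lambda>p. poly p x"]
    by (simp add: n L2_def L3_def poly_laguerre_poly algebra_simps)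
  have "Lhigh \<alpha> (laguerre (real \<alpha>) n) x + pochhammer (real n) (\<alpha> + 2) * laguerre (real \<alpha>) n x
      = D * ((real m + real \<alpha> + 2) * (x * poly L3 x) + (real m + 1) * (x * poly (pderiv L2) x)
        + (real m + 1) * (real m + real \<alpha> + 2) * laguerre (real \<alpha>) n x)"
    unfolding Lh P by (simp add: algebra_simps)
  also have "\<dots> = D * ((real \<alpha> + 1) * (real \<alpha> + 2) * poly L2 x)"
    unfolding contig ..
  finally show ?thesis
    by (simp add: n D_def L2_def poly_laguerre_poly add_ac)
qed

lemma Lhigh_laguerre_0: "Lhigh \<alpha> (laguerre (real \<alpha>) 0) x = 0"
proof -
  have "laguerre (real \<alpha>) 0 = poly 1"
    by (simp add: laguerre_def fun_eq_iff)
  moreover have "(pderiv ^^ (\<alpha> + 2)) (monom 1 (\<alpha> + 1) :: real poly) = 0"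
    by (rule poly_eqI) (subst coeff_higher_pderiv, simp add: coeff_monom)
  ultimately show ?thesis
    by (simp add: Lhigh_poly twisted_pderiv_def)
qed

theorem theorem2p3:
  fixes \<alpha> n :: nat and x :: real
  shows "(n \<ge> 1 \<longrightarrow>
      fact (\<alpha> + 2) * (L2op \<alpha> (Tpoly \<alpha> n) x + real n * Tpoly \<alpha> n x)
        = - pochhammer (real n + 1) \<alpha> * (real \<alpha> + 1) * (real \<alpha> + 2)
            * laguerre (real \<alpha> + 2) (n - 1) x
    \<and> Lhigh \<alpha> (laguerre (real \<alpha>) n) x + pochhammer (real n) (\<alpha> + 2) * laguerre (real \<alpha>) n x
        = pochhammer (real n + 1) \<alpha> * (real \<alpha> + 1) * (real \<alpha> + 2)
            * laguerre (real \<alpha> + 2) (n - 1) x)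
    \<and> (n = 0 \<longrightarrow>
      fact (\<alpha> + 2) * (L2op \<alpha> (Tpoly \<alpha> n) x + real n * Tpoly \<alpha> n x) = 0
    \<and> Lhigh \<alpha> (laguerre (real \<alpha>) n) x + pochhammer (real n) (\<alpha> + 2) * laguerre (real \<alpha>) n x = 0)"
proof (cases "n = 0")
  case True
  have "Tpoly \<alpha> 0 = poly 0"
    by (simp add: Tpoly_def fun_eq_iff)
  then have "L2op \<alpha> (Tpoly \<alpha> 0) x = 0"
    by (simp add: L2op_poly laguerre_op_def)
  with True show ?thesis
    using Lhigh_laguerre_0 by (simp add: Tpoly_def pochhammer_0_left)
next
  case False
  then show ?thesis
    using L2op_Tpoly Lhigh_laguerre by simp
qed

end
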